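(* Let $\Omega\subseteq\mathbb{H}$ be a domain such that $\Omega\cap\mathbb{R}\neq\emptyset$. Then its symmetric completion $\widetilde{\Omega}=\bigcup_{x+yJ\in\Omega}(x+y\mathbb{S})$ is an axially symmetric s-domain.
   Context: $\mathbb{H}$ denotes the quaternions, $\mathbb{S}=\{q\in\mathbb{H}: \mathrm{Re}(q)=0,\ |\mathrm{Im}(q)|=1\}$ the 2-sphere of imaginary units, $L_I=\mathbb{R}+\mathbb{R}I$ for $I\in\mathbb{S}$, and $x+y\mathbb{S}=\{x+yL: L\in\mathbb{S}\}$ for $x,y\in\mathbb{R}$. A domain is a connected open set. A domain $\Omega$ is an s-domain if $\Omega\cap\mathbb{R}\neq\emptyset$ and $\Omega\cap L_I$ is a domain in $L_I$ for every $I\in\mathbb{S}$. A set $\Omega$ is axially symmetric if for every $x+yI\in\Omega$ ($x,y\in\mathbb{R}$, $I\in\mathbb{S}$) the sphere $x+y\mathbb{S}$ is contained in $\Omega$. *)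

theory Defs
  imports "HOL-Analysis.Analysis"
begin

text \<open>Quaternions are modelled as their underlying real Euclidean space
  H = R x R^3: the first component is the real part, the second the imaginary
  part (coefficients of i, j, k). The norm of the product type is the Euclidean
  norm of R^4, so the topology is the standard one. Quaternion multiplication is
  not needed: x + yI with x, y real and I imaginary is x + y *R I.\<close>

type_synonym quat = "real \<times> (real^3)"

definition qreal :: "real \<Rightarrow> quat" where
  "qreal x = (x, 0)"

definition realline :: "quat set" where
  "realline = range qreal"

definition imag_units :: "quat set" where
  "imag_units = {q. fst q = 0 \<and> norm (snd q) = 1}"

definition slice :: "quat \<Rightarrow> quat set" where
  "slice I = {qreal a + b *\<^sub>R I | a b. True}"

definition sph :: "real \<Rightarrow> real \<Rightarrow> quat set" where
  "sph x y = {qreal x + y *\<^sub>R L | L. L \<in> imag_units}"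

definition is_domain :: "quat set \<Rightarrow> bool" where
  "is_domain \<Omega> \<longleftrightarrow> open \<Omega> \<and> connected \<Omega>"

definition s_domain :: "quat set \<Rightarrow> bool" where
  "s_domain \<Omega> \<longleftrightarrow> is_domain \<Omega> \<and> \<Omega> \<inter> realline \<noteq> {} \<and>
     (\<forall>I \<in> imag_units. openin (top_of_set (slice I)) (\<Omega> \<inter> slice I)
                        \<and> connected (\<Omega> \<inter> slice I))"

definition axially_symmetric :: "quat set \<Rightarrow> bool" where
  "axially_symmetric \<Omega> \<longleftrightarrow>
     (\<forall>x y I. I \<in> imag_units \<and> qreal x + y *\<^sub>R I \<in> \<Omega> \<longrightarrow> sph x y \<subseteq> \<Omega>)"

definition sym_completion :: "quat set \<Rightarrow> quat set" where
  "sym_completion \<Omega> =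
     \<Union>{sph x y | x y J. J \<in> imag_units \<and> qreal x + y *\<^sub>R J \<in> \<Omega>}"

end

theory Submission
  imports Defs
begin

text \<open>Membership of a quaternion (x, v) in the symmetric completion depends only on x
  and the length of its imaginary part v: it holds iff some (x, w) with |w| = |v| lies
  in \<Omega>. Hence the completion is the union of the images of \<Omega> under the rotations of
  the imaginary space. Each such image is open and connected and contains the real
  points of \<Omega>, so the union is an open connected set. Its trace on a slice L_I is the
  union of the two images of \<Omega> under (x, v) \<mapsto> x + |v| I and (x, v) \<mapsto> x - |v| I,
  which are connected and meet on the real axis.\<close>

lemma qreal_plus_scaleR_imag_unit:
  "J \<in> imag_units \<Longrightarrow> qreal x + y *\<^sub>R J = (x, y *\<^sub>R snd J)"
  by (cases J) (simp add: qreal_def imag_units_def)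

lemma imag_unit_scaled_to:
  fixes w :: "real^3"
  obtains J where "J \<in> imag_units" "norm w *\<^sub>R snd J = w"
proof (cases "w = 0")
  case True
  then show ?thesis
    using that[of "(0, axis 1 1)"] by (simp add: imag_units_def)
next
  case False
  then show ?thesis
    using that[of "(0, w /\<^sub>R norm w)"] by (simp add: imag_units_def)
qed

lemma mem_sym_completion:
  "q \<in> sym_completion \<Omega> \<longleftrightarrow> (\<exists>w. norm w = norm (snd q) \<and> (fst q, w) \<in> \<Omega>)"
proof
  assume "q \<in> sym_completion \<Omega>"
  then obtain x y J L where J: "J \<in> imag_units" "qreal x + y *\<^sub>R J \<in> \<Omega>"
    and L: "L \<in> imag_units" "q = qreal x + y *\<^sub>R L"
    unfolding sym_completion_def sph_def by blast
  then have "(fst q, y *\<^sub>R snd J) \<in> \<Omega>" "norm (y *\<^sub>R snd J) = norm (snd q)"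
    by (auto simp: qreal_plus_scaleR_imag_unit imag_units_def)
  then show "\<exists>w. norm w = norm (snd q) \<and> (fst q, w) \<in> \<Omega>" by blast
next
  assume "\<exists>w. norm w = norm (snd q) \<and> (fst q, w) \<in> \<Omega>"
  then obtain w where w: "norm w = norm (snd q)" "(fst q, w) \<in> \<Omega>" by blast
  obtain J where J: "J \<in> imag_units" "norm w *\<^sub>R snd J = w"
    using imag_unit_scaled_to by blast
  obtain L where L: "L \<in> imag_units" "norm w *\<^sub>R snd L = snd q"
    using imag_unit_scaled_to[of "snd q"] w(1) by metis
  have "qreal (fst q) + norm w *\<^sub>R J \<in> \<Omega>"
    using J w(2) by (simp add: qreal_plus_scaleR_imag_unit)
  moreover have "q = qreal (fst q) + norm w *\<^sub>R L"
    using L by (simp add: qreal_plus_scaleR_imag_unit)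
  then have "q \<in> sph (fst q) (norm w)"
    using L(1) unfolding sph_def by blast
  ultimately show "q \<in> sym_completion \<Omega>"
    using J(1) unfolding sym_completion_def by blast
qed

lemma subset_sym_completion: "\<Omega> \<subseteq> sym_completion \<Omega>"
  by (auto simp: mem_sym_completion)

lemma axially_symmetric_sym_completion: "axially_symmetric (sym_completion \<Omega>)"
  unfolding axially_symmetric_def sph_def
  by (auto simp: mem_sym_completion qreal_def imag_units_def)

definition rotate_imag :: "(real^3 \<Rightarrow> real^3) \<Rightarrow> quat \<Rightarrow> quat" where
  "rotate_imag f p = (fst p, f (snd p))"

lemma linear_rotate_imag:
  assumes "orthogonal_transformation f"
  shows "linear (rotate_imag f)"
proof -
  interpret f: linear f
    using assms by (rule orthogonal_transformation_linear)
  show ?thesis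
    by (rule linearI) (simp_all add: rotate_imag_def f.add f.scale)
qed

lemma surj_rotate_imag:
  assumes "orthogonal_transformation f"
  shows "surj (rotate_imag f)"
proof (rule surjI)
  fix q :: quat
  show "rotate_imag f (fst q, inv f (snd q)) = q"
    using orthogonal_transformation_surj[OF assms]
    by (simp add: rotate_imag_def surj_f_inv_f)
qed

lemma sym_completion_eq_Union_rotations:
  "sym_completion \<Omega> = (\<Union>f \<in> Collect orthogonal_transformation. rotate_imag f ` \<Omega>)"
proof
  show "sym_completion \<Omega> \<subseteq> (\<Union>f \<in> Collect orthogonal_transformation. rotate_imag f ` \<Omega>)"
  proof
    fix q assume "q \<in> sym_completion \<Omega>"
    then obtain w where w: "norm w = norm (snd q)" "(fst q, w) \<in> \<Omega>"
      by (auto simp: mem_sym_completion)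
    obtain f where "orthogonal_transformation f" "f w = snd q"
      using orthogonal_transformation_exists[OF w(1)] by blast
    with w(2) show "q \<in> (\<Union>f \<in> Collect orthogonal_transformation. rotate_imag f ` \<Omega>)"
      by (auto simp: rotate_imag_def intro!: image_eqI[of _ _ "(fst q, w)"])
  qed
  show "(\<Union>f \<in> Collect orthogonal_transformation. rotate_imag f ` \<Omega>) \<subseteq> sym_completion \<Omega>"
    by (auto simp: mem_sym_completion rotate_imag_def orthogonal_transformation_norm)
qed

lemma open_sym_completion: "open \<Omega> \<Longrightarrow> open (sym_completion \<Omega>)"
  unfolding sym_completion_eq_Union_rotations
  by (auto intro!: open_surjective_linear_image linear_rotate_imag surj_rotate_imag)

lemma connected_sym_completion:
  assumes "connected \<Omega>" and "\<Omega> \<inter> realline \<noteq> {}"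
  shows "connected (sym_completion \<Omega>)"
proof -
  obtain r where r: "(r, 0) \<in> \<Omega>"
    using assms(2) by (auto simp: realline_def qreal_def)
  have "(r, 0) \<in> rotate_imag f ` \<Omega>" if "orthogonal_transformation f" for f
    using r linear_0[OF orthogonal_transformation_linear[OF that]]
    by (auto simp: rotate_imag_def intro!: image_eqI[of _ _ "(r, 0)"])
  then show ?thesis
    unfolding sym_completion_eq_Union_rotations
    by (intro connected_Union) (auto intro: connected_linear_image linear_rotate_imag assms(1))
qed

lemma sym_completion_Int_slice:
  assumes "I \<in> imag_units"
  shows "sym_completion \<Omega> \<inter> slice I =
    (\<lambda>p. (fst p, norm (snd p) *\<^sub>R snd I)) ` \<Omega> \<union> (\<lambda>p. (fst p, - norm (snd p) *\<^sub>R snd I)) ` \<Omega>"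
    (is "_ = ?A \<union> ?B")
proof
  have I: "fst I = 0" "norm (snd I) = 1"
    using assms by (auto simp: imag_units_def)
  show "sym_completion \<Omega> \<inter> slice I \<subseteq> ?A \<union> ?B"
  proof
    fix q assume q: "q \<in> sym_completion \<Omega> \<inter> slice I"
    then obtain a b where ab: "q = (a, b *\<^sub>R snd I)"
      using assms by (auto simp: slice_def qreal_plus_scaleR_imag_unit)
    with q I obtain w where w: "norm w = \<bar>b\<bar>" "(a, w) \<in> \<Omega>"
      by (auto simp: mem_sym_completion)
    show "q \<in> ?A \<union> ?B"
      using ab w by (cases "b \<ge> 0") (auto intro!: image_eqI[of _ _ "(a, w)"])
  qed
  have "?A \<union> ?B \<subseteq> slice I"
    using assms unfolding slice_def
    by (auto simp: qreal_plus_scaleR_imag_unit) (metis scaleR_minus_left)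
  moreover have "?A \<union> ?B \<subseteq> sym_completion \<Omega>"
    using I by (auto simp: mem_sym_completion)
  ultimately show "?A \<union> ?B \<subseteq> sym_completion \<Omega> \<inter> slice I" by blast
qed

lemma connected_sym_completion_Int_slice:
  assumes "connected \<Omega>" and "\<Omega> \<inter> realline \<noteq> {}" and "I \<in> imag_units"
  shows "connected (sym_completion \<Omega> \<inter> slice I)"
proof -
  obtain r where r: "(r, 0) \<in> \<Omega>"
    using assms(2) by (auto simp: realline_def qreal_def)
  let ?A = "(\<lambda>p. (fst p, norm (snd p) *\<^sub>R snd I)) ` \<Omega>"
  let ?B = "(\<lambda>p. (fst p, - norm (snd p) *\<^sub>R snd I)) ` \<Omega>"
  have "connected ?A" "connected ?B"
    by (intro connected_continuous_image[OF _ assms(1)] continuous_intros)+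
  moreover have "(r, 0) \<in> ?A \<inter> ?B"
    using r by (auto intro!: image_eqI[of _ _ "(r, 0)"])
  ultimately show ?thesis
    unfolding sym_completion_Int_slice[OF assms(3)] by (blast intro: connected_Un)
qed

theorem proposition3p4:
  fixes \<Omega> :: "quat set"
  assumes "is_domain \<Omega>" and "\<Omega> \<inter> realline \<noteq> {}"
  shows "axially_symmetric (sym_completion \<Omega>) \<and> s_domain (sym_completion \<Omega>)"
proof -
  have "open \<Omega>" and "connected \<Omega>"
    using assms(1) by (auto simp: is_domain_def)
  from \<open>open \<Omega>\<close> have "open (sym_completion \<Omega>)"
    by (rule open_sym_completion)
  moreover have "openin (top_of_set (slice I)) (sym_completion \<Omega> \<inter> slice I)" for I
    using openin_open_Int[OF \<open>open (sym_completion \<Omega>)\<close>] by (simp add: Int_commute)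
  moreover have "sym_completion \<Omega> \<inter> realline \<noteq> {}"
    using assms(2) subset_sym_completion by blast
  ultimately show ?thesis
    using assms(2) \<open>connected \<Omega>\<close> axially_symmetric_sym_completion connected_sym_completion
      connected_sym_completion_Int_slice
    by (simp add: s_domain_def is_domain_def)
qed

end
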